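(* For all graphs $G$ and $H$, \[\bar{\vartheta}(G \times H) = \min\{\bar{\vartheta}(G), \bar{\vartheta}(H)\}.\]
   Context: Graphs are finite, simple and undirected. The categorical product $G\times H$ has vertex set $V(G)\times V(H)$, with $(u_1,v_1)\sim(u_2,v_2)$ iff $u_1\sim u_2$ and $v_1\sim v_2$. For a real $k>1$, a strict vector $k$-coloring of a graph $G$ is a map $\varphi$ from $V(G)$ to the unit sphere of some $\mathbb{R}^{d}$ such that $\varphi(u)^T\varphi(v) = -\frac{1}{k-1}$ whenever $u\sim v$. The strict vector chromatic number $\bar{\vartheta}(G)$ is the infimum of real $k>1$ such that $G$ admits a strict vector $k$-coloring; equivalently, $\bar{\vartheta}(G)=\vartheta(\overline{G})$, the Lovász theta function of the complement of $G$. *)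

theory Defs
  imports Complex_Main
begin

type_synonym 'a graph = "'a set \<times> ('a \<Rightarrow> 'a \<Rightarrow> bool)"

definition verts :: "'a graph \<Rightarrow> 'a set" where
  "verts G = fst G"

definition adj :: "'a graph \<Rightarrow> 'a \<Rightarrow> 'a \<Rightarrow> bool" where
  "adj G = snd G"

definition is_graph :: "'a graph \<Rightarrow> bool" where
  "is_graph G \<longleftrightarrow> finite (verts G)
     \<and> (\<forall>u v. adj G u v \<longrightarrow> u \<in> verts G \<and> v \<in> verts G)
     \<and> (\<forall>u v. adj G u v \<longrightarrow> adj G v u)
     \<and> (\<forall>u. \<not> adj G u u)"

definition cat_prod :: "'a graph \<Rightarrow> 'b graph \<Rightarrow> ('a \<times> 'b) graph" where
  "cat_prod G H = (verts G \<times> verts H,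
     (\<lambda>(u1, v1) (u2, v2). adj G u1 u2 \<and> adj H v1 v2))"

text \<open>Strict vector k-colouring into the unit sphere of R^d, for some d.
Vectors in R^d are represented as functions nat => real supported in {..<d}.\<close>
definition strict_vector_coloring :: "'a graph \<Rightarrow> real \<Rightarrow> nat \<Rightarrow> ('a \<Rightarrow> nat \<Rightarrow> real) \<Rightarrow> bool" where
  "strict_vector_coloring G k d \<phi> \<longleftrightarrow>
     (\<forall>v\<in>verts G. (\<forall>i\<ge>d. \<phi> v i = 0) \<and> (\<Sum>i<d. (\<phi> v i)\<^sup>2) = 1)
     \<and> (\<forall>u v. adj G u v \<longrightarrow> (\<Sum>i<d. \<phi> u i * \<phi> v i) = - 1 / (k - 1))"

definition strict_vector_colorable :: "'a graph \<Rightarrow> real \<Rightarrow> bool" where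
  "strict_vector_colorable G k \<longleftrightarrow> (\<exists>d \<phi>. strict_vector_coloring G k d \<phi>)"

definition strict_vector_chromatic_number :: "'a graph \<Rightarrow> real" where
  "strict_vector_chromatic_number G = Inf {k. k > 1 \<and> strict_vector_colorable G k}"

end

theory Submission
  imports Defs "HOL-Analysis.Analysis"
begin

text \<open>A strict vector colouring of \<open>G\<close> or of \<open>H\<close> lifts to \<open>G \<times> H\<close> through a projection, so the
  product needs at most the smaller number. Conversely, suppose \<open>G \<times> H\<close> has a strict vector
  \<open>k\<close>-colouring \<open>\<psi>\<close> but neither factor has one. By semidefinite duality, obtained here from a
  nearest-point argument on the compact set of psd matrices of fixed trace, the failure for \<open>G\<close> is
  witnessed by a symmetric matrix \<open>A\<close> supported on the edges of \<open>G\<close> with \<open>A \<ge> -I\<close> and largest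
  eigenvalue \<open>a > k - 1\<close>, and likewise \<open>B\<close>, \<open>b\<close> for \<open>H\<close>. The Schur product of the Gram matrix of
  \<open>\<psi>\<close> with \<open>A \<otimes> B + max a b \<cdot> I \<otimes> I\<close> is psd, and on the support of \<open>A \<otimes> B\<close>, the edges of
  \<open>G \<times> H\<close>, that Gram matrix is the constant \<open>-1/(k - 1)\<close>. Evaluating at top eigenvectors gives
  \<open>a b \<le> (k - 1) max a b\<close>, i.e. \<open>min a b \<le> k - 1\<close>, a contradiction.\<close>


section \<open>Quadratic forms\<close>

definition quad_form :: "'a set \<Rightarrow> ('a \<Rightarrow> 'a \<Rightarrow> real) \<Rightarrow> ('a \<Rightarrow> real) \<Rightarrow> real" where
  "quad_form V M x = (\<Sum>i\<in>V. \<Sum>j\<in>V. x i * x j * M i j)"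

definition psd_on :: "'a set \<Rightarrow> ('a \<Rightarrow> 'a \<Rightarrow> real) \<Rightarrow> bool" where
  "psd_on V M \<longleftrightarrow> (\<forall>x. 0 \<le> quad_form V M x)"

definition symmetric_on :: "'a set \<Rightarrow> ('a \<Rightarrow> 'a \<Rightarrow> real) \<Rightarrow> bool" where
  "symmetric_on V M \<longleftrightarrow> (\<forall>i\<in>V. \<forall>j\<in>V. M i j = M j i)"

definition sqnorm :: "'a set \<Rightarrow> ('a \<Rightarrow> real) \<Rightarrow> real" where
  "sqnorm V x = (\<Sum>i\<in>V. (x i)\<^sup>2)"

definition gram :: "nat \<Rightarrow> ('a \<Rightarrow> nat \<Rightarrow> real) \<Rightarrow> 'a \<Rightarrow> 'a \<Rightarrow> real" where
  "gram d \<phi> i j = (\<Sum>c<d. \<phi> i c * \<phi> j c)"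

lemma symmetric_onD: "symmetric_on V M \<Longrightarrow> i \<in> V \<Longrightarrow> j \<in> V \<Longrightarrow> M i j = M j i"
  unfolding symmetric_on_def by blast

lemma quad_form_cong:
  "(\<And>i. i \<in> V \<Longrightarrow> x i = y i) \<Longrightarrow> (\<And>i j. i \<in> V \<Longrightarrow> j \<in> V \<Longrightarrow> M i j = N i j)
    \<Longrightarrow> quad_form V M x = quad_form V N y"
  unfolding quad_form_def by (intro sum.cong refl) simp

lemma quad_form_linear:
  "quad_form V (\<lambda>i j. a * M i j + b * N i j) x = a * quad_form V M x + b * quad_form V N x"
  unfolding quad_form_def by (simp add: sum.distrib sum_distrib_left algebra_simps)

lemma quad_form_scale: "quad_form V (\<lambda>i j. a * M i j) x = a * quad_form V M x"
  unfolding quad_form_def by (simp add: sum_distrib_left algebra_simps)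

lemma quad_form_rank_one: "quad_form V (\<lambda>i j. y i * y j) x = (\<Sum>i\<in>V. x i * y i)\<^sup>2"
  unfolding quad_form_def by (simp add: power2_eq_square sum_product algebra_simps)

lemma quad_form_gram: "quad_form V (gram d \<phi>) x = (\<Sum>c<d. (\<Sum>i\<in>V. x i * \<phi> i c)\<^sup>2)"
  unfolding quad_form_def gram_def
  by (simp add: power2_eq_square sum_product sum_distrib_left algebra_simps sum.swap[of _ "{..<d}"])

lemma quad_form_identity:
  "finite V \<Longrightarrow> quad_form V (\<lambda>i j. of_bool (i = j)) x = sqnorm V x"
  unfolding quad_form_def sqnorm_def by (simp add: power2_eq_square if_distrib cong: if_cong)

lemma quad_form_diagonal:
  assumes "finite V"
  shows "quad_form V (\<lambda>i j. of_bool (i = j) * d i) x = (\<Sum>i\<in>V. d i * (x i)\<^sup>2)"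
proof -
  have "x i * x j * (of_bool (i = j) * d i) = (if j = i then d i * (x i)\<^sup>2 else 0)" for i j
    by (simp add: power2_eq_square)
  then show ?thesis using assms unfolding quad_form_def by simp
qed

lemma quad_form_congruence:
  "quad_form V (\<lambda>i j. s i * s j * A i j) x = quad_form V A (\<lambda>i. s i * x i)"
  unfolding quad_form_def by (simp add: algebra_simps)

lemma quad_form_delta:
  assumes "finite V" "i \<in> V"
  shows "quad_form V M (\<lambda>l. of_bool (l = i)) = M i i"
proof -
  have "(\<Sum>j\<in>V. of_bool (l = i) * of_bool (j = i) * M l j) = of_bool (l = i) * M i i" for l
    using assms by (cases "l = i") (simp_all add: if_distrib cong: if_cong)
  then show ?thesis using assms unfolding quad_form_def by simp
qed

lemma quad_form_tensor:
  "quad_form (V \<times> W) (\<lambda>p q. P (fst p) (fst q) * Q (snd p) (snd q)) (\<lambda>p. u (fst p) * z (snd p))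
    = quad_form V P u * quad_form W Q z"
proof -
  have "quad_form (V \<times> W) (\<lambda>p q. P (fst p) (fst q) * Q (snd p) (snd q)) (\<lambda>p. u (fst p) * z (snd p))
      = (\<Sum>i\<in>V. \<Sum>k\<in>W. \<Sum>j\<in>V. \<Sum>l\<in>W. (u i * u j * P i j) * (z k * z l * Q k l))"
    unfolding quad_form_def sum.cartesian_product' by (simp add: algebra_simps)
  also have "\<dots> = quad_form V P u * quad_form W Q z"
    unfolding quad_form_def sum_product ..
  finally show ?thesis .
qed

lemma quad_form_swap_product:
  "quad_form (V \<times> W) M x = quad_form (W \<times> V) (\<lambda>p q. M (prod.swap p) (prod.swap q)) (x \<circ> prod.swap)"
proof -
  have "V \<times> W = prod.swap ` (W \<times> V)" by (simp add: product_swap)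
  then show ?thesis unfolding quad_form_def by (simp add: sum.reindex)
qed

lemma quad_form_insert:
  assumes "finite F" "a \<notin> F" "symmetric_on (insert a F) M"
  shows "quad_form (insert a F) M (x(a := s))
    = M a a * s\<^sup>2 + 2 * (\<Sum>j\<in>F. x j * M a j) * s + quad_form F M x"
proof -
  let ?y = "x(a := s)"
  have split: "quad_form (insert a F) M y = y a * y a * M a a + y a * (\<Sum>j\<in>F. y j * M a j)
      + y a * (\<Sum>i\<in>F. y i * M i a) + quad_form F M y" for y
    using assms(1,2) unfolding quad_form_def
    by (simp add: sum.distrib sum_distrib_left algebra_simps)
  have row: "(\<Sum>j\<in>F. ?y j * M a j) = (\<Sum>j\<in>F. x j * M a j)"
    using assms(2) by (intro sum.cong) auto
  have col: "(\<Sum>i\<in>F. ?y i * M i a) = (\<Sum>j\<in>F. x j * M a j)"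
    using assms(2) symmetric_onD[OF assms(3)] by (intro sum.cong) auto
  have rest: "quad_form F M ?y = quad_form F M x"
    using assms(2) by (intro quad_form_cong) auto
  show ?thesis unfolding split row col rest by (simp add: power2_eq_square algebra_simps)
qed

lemma sqnorm_nonneg: "0 \<le> sqnorm V x"
  unfolding sqnorm_def by (simp add: sum_nonneg)

lemma abs_mult_le_sqnorm:
  assumes "finite V" "i \<in> V" "j \<in> V"
  shows "\<bar>x i * x j\<bar> \<le> sqnorm V x"
proof -
  have "2 * \<bar>x i * x j\<bar> \<le> (x i)\<^sup>2 + (x j)\<^sup>2"
    using sum_squares_bound[of "\<bar>x i\<bar>" "\<bar>x j\<bar>"] by (simp add: abs_mult power2_abs)
  moreover have "(x i)\<^sup>2 \<le> sqnorm V x" "(x j)\<^sup>2 \<le> sqnorm V x"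
    using assms unfolding sqnorm_def by (auto intro: member_le_sum)
  ultimately show ?thesis by simp
qed

lemma quad_form_eq_0_if_sqnorm_eq_0:
  assumes "finite V" "sqnorm V x = 0"
  shows "quad_form V M x = 0"
proof -
  have "\<forall>i\<in>V. x i = 0" using assms unfolding sqnorm_def by (simp add: sum_nonneg_eq_0_iff)
  then show ?thesis unfolding quad_form_def by simp
qed

lemma quad_form_le_abs_sum:
  assumes "finite V"
  shows "quad_form V A x \<le> (\<Sum>i\<in>V. \<Sum>j\<in>V. \<bar>A i j\<bar>) * sqnorm V x"
  unfolding quad_form_def sum_distrib_right
proof (intro sum_mono)
  fix i j assume "i \<in> V" "j \<in> V"
  then have "\<bar>x i * x j\<bar> * \<bar>A i j\<bar> \<le> sqnorm V x * \<bar>A i j\<bar>"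
    using abs_mult_le_sqnorm[OF assms] by (intro mult_right_mono) auto
  then show "x i * x j * A i j \<le> \<bar>A i j\<bar> * sqnorm V x"
    by (metis abs_ge_self abs_mult mult.commute order_trans)
qed

section \<open>Positive semidefinite matrices\<close>

lemma psd_on_diag_nonneg: "finite V \<Longrightarrow> psd_on V M \<Longrightarrow> i \<in> V \<Longrightarrow> 0 \<le> M i i"
  using quad_form_delta unfolding psd_on_def by metis

lemma psd_on_add: "psd_on V M \<Longrightarrow> psd_on V N \<Longrightarrow> psd_on V (\<lambda>i j. M i j + N i j)"
  unfolding psd_on_def using quad_form_linear[of V 1 M 1 N] by simp

lemma psd_on_scale: "psd_on V M \<Longrightarrow> 0 \<le> a \<Longrightarrow> psd_on V (\<lambda>i j. a * M i j)"
  unfolding psd_on_def quad_form_scale by simp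

lemma psd_on_identity_combination:
  assumes "finite V" "\<And>x. 0 \<le> \<alpha> * sqnorm V x + \<beta> * quad_form V M x"
  shows "psd_on V (\<lambda>i j. \<alpha> * of_bool (i = j) + \<beta> * M i j)"
  using assms unfolding psd_on_def quad_form_linear quad_form_identity[OF assms(1)] by blast

lemma psd_on_gram: "psd_on V (gram d \<phi>)"
  unfolding psd_on_def quad_form_gram by (simp add: sum_nonneg)

lemma symmetric_on_gram: "symmetric_on V (gram d \<phi>)"
  unfolding symmetric_on_def gram_def by (simp add: mult.commute)

lemma nonneg_quadratic_discriminant:
  fixes \<alpha> \<beta> \<gamma> :: real
  assumes "0 \<le> \<alpha>" and nonneg: "\<And>s. 0 \<le> \<alpha> * s\<^sup>2 + 2 * \<beta> * s + \<gamma>"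
  shows "\<beta>\<^sup>2 \<le> \<alpha> * \<gamma>"
proof (cases "\<alpha> = 0")
  case True
  have "\<beta> = 0"
  proof (rule ccontr)
    assume "\<beta> \<noteq> 0"
    then have "2 * \<beta> * (- (\<gamma> + 1) / (2 * \<beta>)) + \<gamma> = -1" by (simp add: field_simps)
    then show False using nonneg[of "- (\<gamma> + 1) / (2 * \<beta>)"] True by simp
  qed
  then show ?thesis using True by simp
next
  case False
  then have "0 < \<alpha>" using assms(1) by simp
  moreover have "\<alpha> * (- \<beta> / \<alpha>)\<^sup>2 + 2 * \<beta> * (- \<beta> / \<alpha>) + \<gamma> = \<gamma> - \<beta>\<^sup>2 / \<alpha>"
    using False by (simp add: field_simps power2_eq_square)
  ultimately have "\<beta>\<^sup>2 / \<alpha> \<le> \<gamma>" using nonneg[of "- \<beta> / \<alpha>"] by simp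
  with \<open>0 < \<alpha>\<close> show ?thesis by (simp add: pos_divide_le_eq mult.commute)
qed

lemma psd_on_insert_row_bound:
  assumes "finite F" "a \<notin> F" "symmetric_on (insert a F) M" "psd_on (insert a F) M"
  shows "(\<Sum>j\<in>F. x j * M a j)\<^sup>2 \<le> M a a * quad_form F M x"
proof (rule nonneg_quadratic_discriminant)
  show "0 \<le> M a a" using psd_on_diag_nonneg[OF _ assms(4)] assms(1) by simp
  show "0 \<le> M a a * s\<^sup>2 + 2 * (\<Sum>j\<in>F. x j * M a j) * s + quad_form F M x" for s
    using assms(4) quad_form_insert[OF assms(1-3)] unfolding psd_on_def by metis
qed

lemma psd_on_zero_diag_row:
  assumes "finite V" "symmetric_on V M" "psd_on V M" "i \<in> V" "j \<in> V" "M i i = 0"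
  shows "M i j = 0"
proof (cases "j = i")
  case False
  define F where "F = V - {i}"
  have V: "V = insert i F" and "i \<notin> F" "j \<in> F" "finite F"
    using assms False by (auto simp: F_def)
  have "(\<Sum>l\<in>F. of_bool (l = j) * M i l)\<^sup>2 \<le> M i i * quad_form F M (\<lambda>l. of_bool (l = j))"
    using assms(2,3) unfolding V by (intro psd_on_insert_row_bound[OF \<open>finite F\<close> \<open>i \<notin> F\<close>])
  then show ?thesis using \<open>j \<in> F\<close> \<open>finite F\<close> assms(6) by (simp add: if_distrib cong: if_cong)
qed (use assms in simp)

text \<open>When \<open>M a a = 0\<close> the row of \<open>a\<close> vanishes, and \<open>x / 0 = 0\<close>
  turns the complement into \<open>M\<close> itself.\<close>

lemma psd_on_schur_complement:
  assumes "finite F" "a \<notin> F" "symmetric_on (insert a F) M" "psd_on (insert a F) M"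
  shows "psd_on F (\<lambda>i j. M i j - M a i * M a j / M a a)"
  unfolding psd_on_def
proof
  fix x
  define L where "L = (\<Sum>j\<in>F. x j * M a j)"
  have split: "(\<lambda>i j. M i j - M a i * M a j / M a a) = (\<lambda>i j. 1 * M i j + (- 1 / M a a) * (M a i * M a j))"
    by (simp add: fun_eq_iff)
  have eq: "quad_form F (\<lambda>i j. M i j - M a i * M a j / M a a) x = quad_form F M x - L\<^sup>2 / M a a"
    unfolding split quad_form_linear quad_form_rank_one L_def
    by (simp add: mult.commute)
  have "quad_form (insert a F) M (x(a := 0)) = quad_form F M x"
    using quad_form_insert[OF assms(1-3), of x 0] by simp
  then have Q: "0 \<le> quad_form F M x" using assms(4) unfolding psd_on_def by metis
  have CS: "L\<^sup>2 \<le> M a a * quad_form F M x"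
    unfolding L_def by (rule psd_on_insert_row_bound[OF assms])
  have "0 \<le> M a a" using psd_on_diag_nonneg[OF _ assms(4)] assms(1) by simp
  then show "0 \<le> quad_form F (\<lambda>i j. M i j - M a i * M a j / M a a) x"
    unfolding eq using Q CS by (cases "M a a = 0") (simp_all add: pos_divide_le_eq mult.commute)
qed

text \<open>Cholesky decomposition: the row of \<open>a\<close> divided by \<open>sqrt (M a a)\<close>
  becomes a new coordinate, and the Schur complement is decomposed recursively.\<close>

lemma psd_on_imp_gram:
  assumes "finite V" "symmetric_on V M" "psd_on V M"
  shows "\<exists>d \<phi>. \<forall>i\<in>V. \<forall>j\<in>V. M i j = gram d \<phi> i j"
  using assms
proof (induction V arbitrary: M rule: finite_induct)
  case empty
  then show ?case by simp
next
  case (insert a F M)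
  define r where "r i = M a i / sqrt (M a a)" for i
  have Maa: "0 \<le> M a a" using psd_on_diag_nonneg[OF _ insert.prems(2)] insert.hyps(1) by simp
  have "symmetric_on F (\<lambda>i j. M i j - M a i * M a j / M a a)"
    using symmetric_onD[OF insert.prems(1)] unfolding symmetric_on_def by (simp add: mult.commute)
  then obtain d \<phi> where \<phi>: "\<And>i j. i \<in> F \<Longrightarrow> j \<in> F \<Longrightarrow> M i j - M a i * M a j / M a a = gram d \<phi> i j"
    using insert.IH[OF _ psd_on_schur_complement[OF insert.hyps insert.prems]] by blast
  have rr: "r i * r j = M a i * M a j / M a a" for i j
    using Maa unfolding r_def by (simp add: real_sqrt_mult[symmetric])
  have row: "M a j = r a * r j" if "j \<in> insert a F" for j
  proof (cases "M a a = 0")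
    case True
    then show ?thesis
      using psd_on_zero_diag_row[OF _ insert.prems] insert.hyps(1) that by (simp add: r_def)
  qed (use Maa in \<open>simp add: r_def\<close>)
  define \<psi> where "\<psi> i c = (if c = d then r i else if i = a then 0 else \<phi> i c)" for i c
  have "M i j = gram (Suc d) \<psi> i j" if "i \<in> insert a F" "j \<in> insert a F" for i j
  proof -
    have "gram (Suc d) \<psi> i j = gram d \<psi> i j + r i * r j"
      by (simp add: gram_def \<psi>_def)
    also have "gram d \<psi> i j = (if i = a \<or> j = a then 0 else gram d \<phi> i j)"
      unfolding gram_def \<psi>_def by (auto intro: sum.neutral)
    finally have "gram (Suc d) \<psi> i j = (if i = a \<or> j = a then 0 else gram d \<phi> i j) + r i * r j" .
    moreover have "M i a = r a * r i" if "i \<in> insert a F"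
      using row[OF that] symmetric_onD[OF insert.prems(1) that] by simp
    ultimately show ?thesis
      using that insert.hyps(2) \<phi>[of i j] row[of j] rr[of i j] by (auto simp: mult.commute)
  qed
  then show ?case by blast
qed

lemma psd_on_schur_product:
  assumes "finite V" "symmetric_on V M" "psd_on V M" "psd_on V N"
  shows "psd_on V (\<lambda>i j. M i j * N i j)"
  unfolding psd_on_def
proof
  fix x
  obtain d \<phi> where \<phi>: "\<And>i j. i \<in> V \<Longrightarrow> j \<in> V \<Longrightarrow> M i j = gram d \<phi> i j"
    using psd_on_imp_gram[OF assms(1-3)] by blast
  have "quad_form V (\<lambda>i j. M i j * N i j) x = quad_form V (\<lambda>i j. gram d \<phi> i j * N i j) x"
    using \<phi> by (intro quad_form_cong) auto
  also have "\<dots> = (\<Sum>i\<in>V. \<Sum>j\<in>V. \<Sum>c<d. x i * \<phi> i c * (x j * \<phi> j c) * N i j)"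
    unfolding quad_form_def gram_def
    by (simp add: sum_distrib_left sum_distrib_right algebra_simps)
  also have "\<dots> = (\<Sum>i\<in>V. \<Sum>c<d. \<Sum>j\<in>V. x i * \<phi> i c * (x j * \<phi> j c) * N i j)"
    by (intro sum.cong refl) (rule sum.swap)
  also have "\<dots> = (\<Sum>c<d. quad_form V N (\<lambda>i. x i * \<phi> i c))"
    unfolding quad_form_def by (rule sum.swap)
  finally show "0 \<le> quad_form V (\<lambda>i j. M i j * N i j) x"
    using assms(4) unfolding psd_on_def by (simp add: sum_nonneg)
qed

lemma psd_on_lift_fst:
  assumes "psd_on V P"
  shows "psd_on (V \<times> W) (\<lambda>p q. P (fst p) (fst q))"
  unfolding psd_on_def
proof
  fix x
  have "quad_form (V \<times> W) (\<lambda>p q. P (fst p) (fst q)) x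
      = (\<Sum>i\<in>V. \<Sum>k\<in>W. \<Sum>j\<in>V. \<Sum>l\<in>W. x (i, k) * x (j, l) * P i j)"
    unfolding quad_form_def sum.cartesian_product' by simp
  also have "\<dots> = (\<Sum>i\<in>V. \<Sum>j\<in>V. \<Sum>k\<in>W. \<Sum>l\<in>W. x (i, k) * x (j, l) * P i j)"
    by (intro sum.cong refl) (rule sum.swap)
  also have "\<dots> = (\<Sum>i\<in>V. \<Sum>j\<in>V. (\<Sum>k\<in>W. \<Sum>l\<in>W. x (i, k) * x (j, l)) * P i j)"
    by (simp only: sum_distrib_right)
  also have "\<dots> = quad_form V P (\<lambda>i. \<Sum>k\<in>W. x (i, k))"
    unfolding quad_form_def sum_product ..
  finally show "0 \<le> quad_form (V \<times> W) (\<lambda>p q. P (fst p) (fst q)) x"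
    using assms unfolding psd_on_def by simp
qed

lemma psd_on_lift_snd:
  assumes "psd_on W Q"
  shows "psd_on (V \<times> W) (\<lambda>p q. Q (snd p) (snd q))"
  using psd_on_lift_fst[OF assms, of V] unfolding psd_on_def
  by (subst quad_form_swap_product) simp

lemma psd_on_gram_schur_tensor:
  assumes "finite V" "finite W" "symmetric_on V P" "psd_on V P" "psd_on W Q"
  shows "psd_on (V \<times> W) (\<lambda>p q. gram d \<psi> p q * (P (fst p) (fst q) * Q (snd p) (snd q)))"
proof -
  have "symmetric_on (V \<times> W) (\<lambda>p q. P (fst p) (fst q))"
    using assms(3) unfolding symmetric_on_def by auto
  then have "psd_on (V \<times> W) (\<lambda>p q. P (fst p) (fst q) * Q (snd p) (snd q))"
    using assms psd_on_lift_fst psd_on_lift_snd by (intro psd_on_schur_product) auto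
  then show ?thesis
    using assms(1,2) by (intro psd_on_schur_product[OF _ symmetric_on_gram psd_on_gram]) auto
qed

text \<open>\<open>(a + 1) (b + 1) (A \<otimes> B + max a b \<cdot> I \<otimes> I)\<close> is a nonnegative combination of
  tensor products of \<open>I + A\<close>, \<open>a I - A\<close>, \<open>I + B\<close> and \<open>b I - B\<close>.\<close>

lemma psd_on_gram_schur_tensor_shifted:
  assumes fin: "finite V" "finite W" and "symmetric_on V A"
    and A: "\<And>x. - sqnorm V x \<le> quad_form V A x" "\<And>x. quad_form V A x \<le> a * sqnorm V x"
    and B: "\<And>x. - sqnorm W x \<le> quad_form W B x" "\<And>x. quad_form W B x \<le> b * sqnorm W x"
    and "0 \<le> a" "0 \<le> b"
  shows "psd_on (V \<times> W) (\<lambda>p q. gram d \<psi> p q * (A (fst p) (fst q) * B (snd p) (snd q)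
           + max a b * (of_bool (fst p = fst q) * of_bool (snd p = snd q))))"
proof -
  let ?m = "max a b"
  define N where "N P Q p q = gram d \<psi> p q * (P (fst p) (fst q) * Q (snd p) (snd q))"
    for P :: "'a \<Rightarrow> 'a \<Rightarrow> real" and Q :: "'b \<Rightarrow> 'b \<Rightarrow> real" and p q
  define P1 where "P1 i j = 1 * of_bool (i = j) + 1 * A i j" for i j
  define P2 where "P2 i j = a * of_bool (i = j) + (- 1) * A i j" for i j
  define Q1 where "Q1 i j = 1 * of_bool (i = j) + 1 * B i j" for i j
  define Q2 where "Q2 i j = b * of_bool (i = j) + (- 1) * B i j" for i j
  have "psd_on V P1" "psd_on V P2"
    unfolding P1_def P2_def using A by (intro psd_on_identity_combination[OF fin(1)]; smt (verit))+
  moreover have "psd_on W Q1" "psd_on W Q2"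
    unfolding Q1_def Q2_def using B by (intro psd_on_identity_combination[OF fin(2)]; smt (verit))+
  moreover have "symmetric_on V P1" "symmetric_on V P2"
    using assms(3) unfolding P1_def P2_def symmetric_on_def by auto
  ultimately have "psd_on (V \<times> W) (N P1 Q1)" "psd_on (V \<times> W) (N P1 Q2)"
    "psd_on (V \<times> W) (N P2 Q1)" "psd_on (V \<times> W) (N P2 Q2)"
    unfolding N_def by (simp_all add: psd_on_gram_schur_tensor[OF fin])
  then have "psd_on (V \<times> W) (\<lambda>p q. (a * b + ?m) * N P1 Q1 p q + (?m - a) * N P1 Q2 p q
      + ((?m - b) * N P2 Q1 p q + (1 + ?m) * N P2 Q2 p q))"
    using \<open>0 \<le> a\<close> \<open>0 \<le> b\<close> by (intro psd_on_add psd_on_scale) auto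
  then have "psd_on (V \<times> W) (\<lambda>p q. (1 / ((a + 1) * (b + 1))) * ((a * b + ?m) * N P1 Q1 p q
      + (?m - a) * N P1 Q2 p q + ((?m - b) * N P2 Q1 p q + (1 + ?m) * N P2 Q2 p q)))"
    using \<open>0 \<le> a\<close> \<open>0 \<le> b\<close> by (intro psd_on_scale) simp_all
  moreover have "(a * b + ?m) * N P1 Q1 p q + (?m - a) * N P1 Q2 p q + ((?m - b) * N P2 Q1 p q + (1 + ?m) * N P2 Q2 p q)
      = (a + 1) * (b + 1) * (gram d \<psi> p q * (A (fst p) (fst q) * B (snd p) (snd q)
           + ?m * (of_bool (fst p = fst q) * of_bool (snd p = snd q))))" for p q
    unfolding N_def P1_def P2_def Q1_def Q2_def by algebra
  ultimately show ?thesis using \<open>0 \<le> a\<close> \<open>0 \<le> b\<close> by simp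
qed

text \<open>Where \<open>W i i = 0\<close> the division yields \<open>0\<close>; this is harmless because
  the whole row of \<open>W\<close> then vanishes.\<close>

lemma psd_on_normalized_offdiag:
  assumes "finite V" "symmetric_on V W" "psd_on V W"
  defines "A \<equiv> \<lambda>i j. if i = j then 0 else W i j / (sqrt (W i i) * sqrt (W j j))"
  shows "- sqnorm V x \<le> quad_form V A x"
    and "quad_form V A (\<lambda>i. sqrt (W i i)) = (\<Sum>i\<in>V. \<Sum>j\<in>V. if i = j then 0 else W i j)"
proof -
  let ?s = "\<lambda>i. sqrt (W i i)"
  have diag: "0 \<le> W i i" if "i \<in> V" for i using psd_on_diag_nonneg[OF assms(1,3) that] .
  have zero: "W i j = 0" if "i \<in> V" "j \<in> V" "?s i * ?s j = 0" for i j
  proof -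
    have "W i i = 0 \<or> W j j = 0" using that(3) by simp
    then show ?thesis
      using psd_on_zero_diag_row[OF assms(1-3)] symmetric_onD[OF assms(2)] that(1,2) by metis
  qed
  have scaled: "?s i * ?s j * A i j = (if i = j then 0 else W i j)" if "i \<in> V" "j \<in> V" for i j
    using zero[OF that] unfolding A_def by auto
  define x' where "x' i = x i / ?s i" for i
  have "0 \<le> quad_form V W x'" using assms(3) unfolding psd_on_def by blast
  also have "quad_form V W x' = (\<Sum>i\<in>V. (?s i * x' i)\<^sup>2) + quad_form V A (\<lambda>i. ?s i * x' i)"
  proof -
    have "quad_form V W x'
        = quad_form V (\<lambda>i j. 1 * (of_bool (i = j) * W i i) + 1 * (?s i * ?s j * A i j)) x'"
      using scaled by (intro quad_form_cong) auto
    also have "\<dots> = (\<Sum>i\<in>V. (?s i * x' i)\<^sup>2) + quad_form V A (\<lambda>i. ?s i * x' i)"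
      unfolding quad_form_linear quad_form_diagonal[OF assms(1)] quad_form_congruence
      using diag by (simp add: power_mult_distrib mult.commute)
    finally show ?thesis .
  qed
  also have "quad_form V A (\<lambda>i. ?s i * x' i) = quad_form V A x"
    unfolding quad_form_def A_def x'_def by (intro sum.cong refl) auto
  also have "(\<Sum>i\<in>V. (?s i * x' i)\<^sup>2) \<le> sqnorm V x"
    unfolding sqnorm_def x'_def by (intro sum_mono) (auto simp: power2_eq_square)
  finally show "- sqnorm V x \<le> quad_form V A x" by simp
  show "quad_form V A ?s = (\<Sum>i\<in>V. \<Sum>j\<in>V. if i = j then 0 else W i j)"
    unfolding quad_form_def using scaled by (intro sum.cong refl) simp
qed

section \<open>The largest eigenvalue as a maximal Rayleigh quotient\<close>

definition rayleigh_max :: "'a set \<Rightarrow> ('a \<Rightarrow> 'a \<Rightarrow> real) \<Rightarrow> real" where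
  "rayleigh_max V A = Sup {quad_form V A x / sqnorm V x | x. 0 < sqnorm V x}"

lemma bdd_above_rayleigh_quotients:
  "finite V \<Longrightarrow> bdd_above {quad_form V A x / sqnorm V x | x. 0 < sqnorm V x}"
  unfolding bdd_above_def using quad_form_le_abs_sum
  by (fastforce simp: divide_le_eq)

lemma quad_form_le_rayleigh_max:
  assumes "finite V"
  shows "quad_form V A x \<le> rayleigh_max V A * sqnorm V x"
proof (cases "sqnorm V x = 0")
  case False
  then have "0 < sqnorm V x" using sqnorm_nonneg[of V x] by simp
  then have "quad_form V A x / sqnorm V x \<le> rayleigh_max V A"
    unfolding rayleigh_max_def by (intro cSup_upper bdd_above_rayleigh_quotients[OF assms]) blast
  then show ?thesis using \<open>0 < sqnorm V x\<close> by (simp add: divide_le_eq)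
qed (simp add: quad_form_eq_0_if_sqnorm_eq_0[OF assms])

lemma rayleigh_max_greater:
  assumes "finite V" "c * sqnorm V v < quad_form V A v"
  shows "c < rayleigh_max V A"
proof -
  have "sqnorm V v \<noteq> 0" using assms quad_form_eq_0_if_sqnorm_eq_0 by fastforce
  then have pos: "0 < sqnorm V v" using sqnorm_nonneg[of V v] by simp
  then have "c < quad_form V A v / sqnorm V v" using assms(2) by (simp add: less_divide_eq)
  also have "\<dots> \<le> rayleigh_max V A"
    unfolding rayleigh_max_def using pos by (intro cSup_upper bdd_above_rayleigh_quotients[OF assms(1)]) blast
  finally show ?thesis .
qed

lemma rayleigh_max_least:
  assumes "finite V" "V \<noteq> {}" "\<And>x. quad_form V A x \<le> c * sqnorm V x"
  shows "rayleigh_max V A \<le> c"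
  unfolding rayleigh_max_def
proof (rule cSup_least)
  have "0 < sqnorm V (\<lambda>_. 1)" using assms(1,2) by (simp add: sqnorm_def card_gt_0_iff)
  then show "{quad_form V A x / sqnorm V x | x. 0 < sqnorm V x} \<noteq> {}" by blast
qed (use assms(3) in \<open>auto simp: divide_le_eq\<close>)

lemma rayleigh_max_mult_le:
  assumes "finite V" "finite W" "V \<noteq> {}" "W \<noteq> {}" "0 < rayleigh_max V A" "0 \<le> C"
    and bound: "\<And>u z. quad_form V A u * quad_form W B z \<le> C * (sqnorm V u * sqnorm W z)"
  shows "rayleigh_max V A * rayleigh_max W B \<le> C"
proof -
  let ?a = "rayleigh_max V A"
  have "quad_form W B z \<le> C / ?a * sqnorm W z" for z
  proof (cases "0 < quad_form W B z")
    case True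
    have "quad_form V A u \<le> C * sqnorm W z / quad_form W B z * sqnorm V u" for u
      using bound[of u z] True by (simp add: field_simps)
    then have "?a \<le> C * sqnorm W z / quad_form W B z"
      by (rule rayleigh_max_least[OF assms(1,3)])
    then show ?thesis using True assms(5) by (simp add: field_simps)
  next
    case False
    moreover have "0 \<le> C / ?a * sqnorm W z" using assms(5,6) sqnorm_nonneg[of W z] by simp
    ultimately show ?thesis by linarith
  qed
  then have "rayleigh_max W B \<le> C / ?a" by (rule rayleigh_max_least[OF assms(2,4)])
  then show ?thesis using assms(5) by (simp add: field_simps mult.commute)
qed

section \<open>Duality for psd matrices with unit diagonal\<close>

text \<open>The box constraint follows from the other ones, but it makes compactness immediate.\<close>

definition spectraplex :: "'a set \<Rightarrow> real \<Rightarrow> ('a \<times> 'a \<Rightarrow> real) set" where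
  "spectraplex V c = {F \<in> PiE (V \<times> V) (\<lambda>_. {-c..c}).
     symmetric_on V (\<lambda>i j. F (i, j)) \<and> psd_on V (\<lambda>i j. F (i, j)) \<and> (\<Sum>i\<in>V. F (i, i)) = c}"

lemma compactin_spectraplex:
  assumes "finite V"
  shows "compactin (product_topology (\<lambda>_. euclideanreal) (V \<times> V)) (spectraplex V c)"
proof -
  let ?X = "product_topology (\<lambda>_. euclideanreal) (V \<times> V)"
  have closed: "closedin ?X {F \<in> topspace ?X. f F \<in> C}"
    if "continuous_map ?X euclideanreal f" "closed C" for f C
    using closedin_continuous_map_preimage[OF that(1)] that(2) by simp
  define asym where "asym F = (\<Sum>p\<in>V \<times> V. (F p - F (snd p, fst p))\<^sup>2)" for F :: "'a \<times> 'a \<Rightarrow> real"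
  have "symmetric_on V (\<lambda>i j. F (i, j)) \<longleftrightarrow> asym F = 0" for F
    using assms unfolding asym_def symmetric_on_def by (simp add: sum_nonneg_eq_0_iff)
  then have eq: "spectraplex V c = PiE (V \<times> V) (\<lambda>_. {-c..c})
      \<inter> ({F \<in> topspace ?X. asym F \<in> {0}} \<inter> {F \<in> topspace ?X. (\<Sum>i\<in>V. F (i, i)) \<in> {c}}
         \<inter> (\<Inter>x. {F \<in> topspace ?X. quad_form V (\<lambda>i j. F (i, j)) x \<in> {0..}}))"
    unfolding spectraplex_def psd_on_def by (auto simp: PiE_def)
  have "closedin ?X ({F \<in> topspace ?X. asym F \<in> {0}} \<inter> {F \<in> topspace ?X. (\<Sum>i\<in>V. F (i, i)) \<in> {c}}
         \<inter> (\<Inter>x. {F \<in> topspace ?X. quad_form V (\<lambda>i j. F (i, j)) x \<in> {0..}}))"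
    using assms unfolding asym_def quad_form_def
    by (intro closedin_Int closedin_INT closed continuous_intros) auto
  moreover have "compactin ?X (PiE (V \<times> V) (\<lambda>_. {-c..c}))"
    by (simp add: compactin_PiE)
  ultimately show ?thesis
    unfolding eq by (subst Int_commute) (rule closed_Int_compactin)
qed

lemma continuous_map_attains_inf:
  fixes f :: "'a \<Rightarrow> real"
  assumes "compactin X S" "S \<noteq> {}" "continuous_map X euclideanreal f"
  shows "\<exists>x\<in>S. \<forall>y\<in>S. f x \<le> f y"
proof -
  have "compact (f ` S)" using image_compactin[OF assms(1,3)] by simp
  then obtain m where "m \<in> f ` S" "\<forall>z\<in>f ` S. m \<le> z"
    using compact_attains_inf assms(2) by (metis image_is_empty)
  then show ?thesis by blast
qed

lemma sum_power2_add_scaled: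
  fixes a d :: "'i \<Rightarrow> real"
  shows "(\<Sum>p\<in>J. (a p + l * d p)\<^sup>2)
    = (\<Sum>p\<in>J. (a p)\<^sup>2) + 2 * l * (\<Sum>p\<in>J. a p * d p) + l\<^sup>2 * (\<Sum>p\<in>J. (d p)\<^sup>2)"
proof -
  have "(\<Sum>p\<in>J. (a p + l * d p)\<^sup>2) = (\<Sum>p\<in>J. (a p)\<^sup>2 + 2 * l * (a p * d p) + l\<^sup>2 * (d p)\<^sup>2)"
    by (intro sum.cong) (auto simp: power2_eq_square algebra_simps)
  then show ?thesis by (simp add: sum.distrib sum_distrib_left)
qed

lemma sum_squares_min_variational:
  fixes F0 T :: "'i \<Rightarrow> real"
  assumes star: "\<And>F l. F \<in> S \<Longrightarrow> 0 < l \<Longrightarrow> l \<le> 1 \<Longrightarrow> (\<lambda>p. F0 p + l * (F p - F0 p)) \<in> S"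
    and min: "\<And>F. F \<in> S \<Longrightarrow> (\<Sum>p\<in>J. (F0 p - T p)\<^sup>2) \<le> (\<Sum>p\<in>J. (F p - T p)\<^sup>2)"
    and "F \<in> S"
  shows "0 \<le> (\<Sum>p\<in>J. (F0 p - T p) * (F p - F0 p))"
proof (rule ccontr)
  define D where "D = (\<Sum>p\<in>J. (F0 p - T p) * (F p - F0 p))"
  define K where "K = (\<Sum>p\<in>J. (F p - F0 p)\<^sup>2)"
  assume "\<not> 0 \<le> (\<Sum>p\<in>J. (F0 p - T p) * (F p - F0 p))"
  then have "D < 0" unfolding D_def by simp
  have "0 \<le> K" unfolding K_def by (simp add: sum_nonneg)
  define l where "l = - D / (K - D)"
  have l: "0 < l" "l \<le> 1" unfolding l_def using \<open>D < 0\<close> \<open>0 \<le> K\<close> by (auto simp: field_simps)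
  have "(\<Sum>p\<in>J. (F0 p - T p)\<^sup>2) \<le> (\<Sum>p\<in>J. (F0 p + l * (F p - F0 p) - T p)\<^sup>2)"
    using min[OF star[OF \<open>F \<in> S\<close> l]] by simp
  also have "\<dots> = (\<Sum>p\<in>J. (F0 p - T p)\<^sup>2) + 2 * l * D + l\<^sup>2 * K"
    unfolding D_def K_def sum_power2_add_scaled[symmetric] by (simp add: algebra_simps)
  finally have "0 \<le> l * (2 * D + l * K)" by (simp add: power2_eq_square algebra_simps)
  then have "0 \<le> 2 * D + l * K" using l by (simp add: zero_le_mult_iff)
  moreover have "2 * D + l * K = D * (K - 2 * D) / (K - D)"
    unfolding l_def using \<open>D < 0\<close> \<open>0 \<le> K\<close> by (simp add: field_simps)
  moreover have "D * (K - 2 * D) / (K - D) < 0"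
    using \<open>D < 0\<close> \<open>0 \<le> K\<close> by (intro divide_neg_pos mult_neg_pos) auto
  ultimately show False by simp
qed

lemma spectraplex_segment:
  assumes "F0 \<in> spectraplex V c" "F \<in> spectraplex V c" "0 \<le> l" "l \<le> 1"
  shows "(\<lambda>p. F0 p + l * (F p - F0 p)) \<in> spectraplex V c"
proof -
  have conv: "(\<lambda>p. F0 p + l * (F p - F0 p)) = (\<lambda>p. (1 - l) * F0 p + l * F p)"
    by (simp add: fun_eq_iff algebra_simps)
  have box: "(1 - l) * a + l * b \<in> {-c..c}" if "a \<in> {-c..c}" "b \<in> {-c..c}" for a b
  proof -
    have "(1 - l) * a + l * b \<le> (1 - l) * c + l * c" "(1 - l) * (-c) + l * (-c) \<le> (1 - l) * a + l * b"
      using that assms(3,4) by (intro add_mono mult_left_mono; simp)+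
    then show ?thesis by (simp add: algebra_simps)
  qed
  have F0: "F0 \<in> PiE (V \<times> V) (\<lambda>_. {-c..c})" "symmetric_on V (\<lambda>i j. F0 (i, j))"
      "psd_on V (\<lambda>i j. F0 (i, j))" "(\<Sum>i\<in>V. F0 (i, i)) = c"
    and F: "F \<in> PiE (V \<times> V) (\<lambda>_. {-c..c})" "symmetric_on V (\<lambda>i j. F (i, j))"
      "psd_on V (\<lambda>i j. F (i, j))" "(\<Sum>i\<in>V. F (i, i)) = c"
    using assms(1,2) unfolding spectraplex_def by auto
  have "(\<lambda>p. (1 - l) * F0 p + l * F p) \<in> PiE (V \<times> V) (\<lambda>_. {-c..c})"
    using F0(1) F(1) box by (auto simp: PiE_iff extensional_def simp flip: distrib_right)
  moreover have "symmetric_on V (\<lambda>i j. (1 - l) * F0 (i, j) + l * F (i, j))"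
    using F0(2) F(2) unfolding symmetric_on_def by simp
  moreover have "psd_on V (\<lambda>i j. (1 - l) * F0 (i, j) + l * F (i, j))"
    using F0(3) F(3) assms(3,4) by (intro psd_on_add psd_on_scale) auto
  moreover have "(\<Sum>i\<in>V. (1 - l) * F0 (i, i) + l * F (i, i)) = c"
    using F0(4) F(4) by (simp add: sum.distrib flip: sum_distrib_left) (simp add: algebra_simps)
  ultimately show ?thesis unfolding conv spectraplex_def by simp
qed

lemma spectraplex_rank_one:
  assumes "finite V" "0 \<le> c" "0 < sqnorm V x"
  shows "restrict (\<lambda>p. c / sqnorm V x * (x (fst p) * x (snd p))) (V \<times> V) \<in> spectraplex V c"
    (is "?F \<in> _")
proof -
  let ?w = "c / sqnorm V x"
  have F: "?F (i, j) = ?w * (x i * x j)" if "i \<in> V" "j \<in> V" for i j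
    using that by simp
  have "?w * (x i * x j) \<in> {-c..c}" if "i \<in> V" "j \<in> V" for i j
  proof -
    have "\<bar>?w * (x i * x j)\<bar> = ?w * \<bar>x i * x j\<bar>"
      using assms(2,3) by (simp add: abs_mult)
    also have "\<dots> \<le> ?w * sqnorm V x"
      using abs_mult_le_sqnorm[OF assms(1) that] assms(2,3) by (intro mult_left_mono) auto
    finally have "\<bar>?w * (x i * x j)\<bar> \<le> c" using assms(3) by simp
    then show ?thesis unfolding atLeastAtMost_iff abs_le_iff by linarith
  qed
  then have "?F \<in> PiE (V \<times> V) (\<lambda>_. {-c..c})"
    unfolding restrict_PiE_iff by auto
  moreover have "psd_on V (\<lambda>i j. ?F (i, j))"
    unfolding psd_on_def
  proof
    fix y
    have "quad_form V (\<lambda>i j. ?F (i, j)) y = quad_form V (\<lambda>i j. ?w * (x i * x j)) y"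
      by (intro quad_form_cong) auto
    also have "\<dots> = ?w * (\<Sum>i\<in>V. y i * x i)\<^sup>2"
      by (simp only: quad_form_scale quad_form_rank_one)
    finally show "0 \<le> quad_form V (\<lambda>i j. ?F (i, j)) y" using assms(2,3) by simp
  qed
  moreover have "(\<Sum>i\<in>V. ?F (i, i)) = ?w * sqnorm V x"
    unfolding sqnorm_def by (simp add: sum_distrib_left power2_eq_square)
  ultimately show ?thesis
    using assms(3) unfolding spectraplex_def symmetric_on_def by (simp add: mult.commute)
qed

lemma psd_on_if_spectraplex_lower_bound:
  assumes "finite V" "0 < c" and bound: "\<And>F. F \<in> spectraplex V c \<Longrightarrow> b \<le> (\<Sum>p\<in>V \<times> V. R p * F p)"
  shows "psd_on V (\<lambda>i j. R (i, j) - b / c * of_bool (i = j))"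
  unfolding psd_on_def
proof
  fix x
  let ?R = "\<lambda>i j. R (i, j)"
  have "quad_form V (\<lambda>i j. 1 * ?R i j + (- b / c) * of_bool (i = j)) x
      = quad_form V ?R x - b / c * sqnorm V x"
    unfolding quad_form_linear quad_form_identity[OF assms(1)] by simp
  moreover have "b / c * sqnorm V x \<le> quad_form V ?R x"
  proof (cases "sqnorm V x = 0")
    case True
    then show ?thesis using quad_form_eq_0_if_sqnorm_eq_0[OF assms(1)] by simp
  next
    case False
    then have pos: "0 < sqnorm V x" using sqnorm_nonneg[of V x] by simp
    let ?F = "restrict (\<lambda>p. c / sqnorm V x * (x (fst p) * x (snd p))) (V \<times> V)"
    have "(\<Sum>p\<in>V \<times> V. R p * ?F p) = c / sqnorm V x * quad_form V ?R x"
      unfolding quad_form_def sum.cartesian_product' sum_distrib_left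
      by (intro sum.cong) (auto simp: algebra_simps)
    then have "b \<le> c / sqnorm V x * quad_form V ?R x"
      using bound[OF spectraplex_rank_one[OF assms(1) _ pos]] assms(2) by simp
    then show ?thesis using pos assms(2) by (simp add: field_simps)
  qed
  ultimately show "0 \<le> quad_form V (\<lambda>i j. R (i, j) - b / c * of_bool (i = j)) x" by simp
qed

lemma spectraplex_nearest_point:
  assumes "finite V" "V \<noteq> {}" "J \<subseteq> V \<times> V"
  obtains F0 where "F0 \<in> spectraplex V (card V)"
    "\<And>F. F \<in> spectraplex V (card V) \<Longrightarrow> 0 \<le> (\<Sum>p\<in>J. (F0 p - T p) * (F p - F0 p))"
proof -
  let ?S = "spectraplex V (card V)"
  have "sqnorm V (\<lambda>_. 1) = card V" unfolding sqnorm_def by simp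
  moreover have "0 < card V" using assms(1,2) by (simp add: card_gt_0_iff)
  ultimately have nonempty: "?S \<noteq> {}"
    using spectraplex_rank_one[OF assms(1), of "card V" "\<lambda>_. 1"] by auto
  have "finite J" using assms(1,3) finite_subset by blast
  then have cont: "continuous_map (product_topology (\<lambda>_. euclideanreal) (V \<times> V)) euclideanreal
      (\<lambda>F. \<Sum>p\<in>J. (F p - T p)\<^sup>2)"
    using assms(3) by (intro continuous_intros) auto
  obtain F0 where "F0 \<in> ?S" and min: "\<forall>F\<in>?S. (\<Sum>p\<in>J. (F0 p - T p)\<^sup>2) \<le> (\<Sum>p\<in>J. (F p - T p)\<^sup>2)"
    using continuous_map_attains_inf[OF compactin_spectraplex[OF assms(1)] nonempty cont] by blast
  show ?thesis
  proof (rule that[OF \<open>F0 \<in> ?S\<close>])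
    fix F assume "F \<in> ?S"
    show "0 \<le> (\<Sum>p\<in>J. (F0 p - T p) * (F p - F0 p))"
    proof (rule sum_squares_min_variational[where S = ?S])
      show "(\<lambda>p. F0 p + l * (F p - F0 p)) \<in> ?S" if "F \<in> ?S" "0 < l" "l \<le> 1" for F l
        using spectraplex_segment[OF \<open>F0 \<in> ?S\<close> that(1)] that(2,3) by simp
    qed (use min \<open>F \<in> ?S\<close> in auto)
  qed
qed

text \<open>The residual of the point of the spectraplex nearest to \<open>T\<close> on \<open>J\<close> is
  a supporting linear functional; shifting it by a multiple of the identity makes it positive
  semidefinite.\<close>

lemma spectraplex_dual_certificate:
  assumes "finite V" "V \<noteq> {}"
    and J: "J \<subseteq> V \<times> V" "\<And>i. i \<in> V \<Longrightarrow> (i, i) \<in> J" "\<And>i j. (i, j) \<in> J \<Longrightarrow> (j, i) \<in> J"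
    and T: "\<And>i. T (i, i) = 1" "\<And>i j. T (i, j) = T (j, i)"
  obtains F0 W where "F0 \<in> spectraplex V (card V)" "symmetric_on V W" "psd_on V W"
    "\<And>i j. i \<in> V \<Longrightarrow> j \<in> V \<Longrightarrow> (i, j) \<notin> J \<Longrightarrow> W i j = 0"
    "(\<Sum>i\<in>V. \<Sum>j\<in>V. W i j * T (i, j)) = - (\<Sum>p\<in>J. (F0 p - T p)\<^sup>2)"
proof -
  define c where "c = real (card V)"
  have "0 < c" using assms(1,2) by (simp add: c_def card_gt_0_iff)
  obtain F0 where F0: "F0 \<in> spectraplex V c"
    and var: "\<And>F. F \<in> spectraplex V c \<Longrightarrow> 0 \<le> (\<Sum>p\<in>J. (F0 p - T p) * (F p - F0 p))"
    using spectraplex_nearest_point[OF assms(1,2) J(1), of T] unfolding c_def by blast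
  define R where "R p = (if p \<in> J then F0 p - T p else 0)" for p
  define b where "b = (\<Sum>p\<in>V \<times> V. R p * F0 p)"
  define W where "W i j = R (i, j) - b / c * of_bool (i = j)" for i j
  have on_J: "(\<Sum>p\<in>J. f p) = (\<Sum>p\<in>V \<times> V. if p \<in> J then f p else 0)" for f :: "_ \<Rightarrow> real"
    using sum.inter_restrict[of "V \<times> V" f J] assms(1) J(1) by (simp add: Int_absorb1)
  have "(\<Sum>p\<in>V \<times> V. R p * F p) - b = (\<Sum>p\<in>J. (F0 p - T p) * (F p - F0 p))" for F
    unfolding b_def on_J sum_subtractf[symmetric] by (intro sum.cong) (auto simp: R_def algebra_simps)
  then have "b \<le> (\<Sum>p\<in>V \<times> V. R p * F p)" if "F \<in> spectraplex V c" for F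
    using var[OF that] by (metis diff_ge_0_iff_ge)
  then have "psd_on V W"
    unfolding W_def by (rule psd_on_if_spectraplex_lower_bound[OF assms(1) \<open>0 < c\<close>])
  moreover have "symmetric_on V W"
    using F0 J(3) T(2) unfolding symmetric_on_def spectraplex_def W_def R_def by auto
  moreover have "W i j = 0" if "i \<in> V" "j \<in> V" "(i, j) \<notin> J" for i j
    using that J(2) unfolding W_def R_def by auto
  moreover have "(\<Sum>i\<in>V. \<Sum>j\<in>V. W i j * T (i, j)) = - (\<Sum>p\<in>J. (F0 p - T p)\<^sup>2)"
  proof -
    have "b = (\<Sum>p\<in>J. (F0 p - T p)\<^sup>2) + (\<Sum>p\<in>V \<times> V. R p * T p)"
      unfolding b_def on_J sum.distrib[symmetric]
      by (intro sum.cong) (auto simp: R_def power2_eq_square algebra_simps)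
    moreover have "(\<Sum>i\<in>V. \<Sum>j\<in>V. W i j * T (i, j))
        = (\<Sum>p\<in>V \<times> V. R p * T p) - b / c * (\<Sum>i\<in>V. \<Sum>j\<in>V. of_bool (i = j) * T (i, j))"
      unfolding W_def sum.cartesian_product'
      by (simp add: left_diff_distrib sum_subtractf sum_distrib_left mult.assoc)
    moreover have "(\<Sum>i\<in>V. \<Sum>j\<in>V. of_bool (i = j) * T (i, j)) = c"
      using assms(1) T(1) by (simp add: c_def if_distrib cong: if_cong)
    ultimately show ?thesis using \<open>0 < c\<close> by simp
  qed
  ultimately show ?thesis using that F0 unfolding c_def by blast
qed

lemma psd_unit_diagonal_infeasible_certificate:
  fixes E :: "'a \<Rightarrow> 'a \<Rightarrow> bool" and t :: real
  assumes "finite V" and E_sym: "\<And>i j. E i j \<Longrightarrow> E j i" and E_irrefl: "\<And>i. \<not> E i i"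
    and infeasible: "\<not> (\<exists>M. symmetric_on V M \<and> psd_on V M \<and> (\<forall>i\<in>V. M i i = 1)
                          \<and> (\<forall>i\<in>V. \<forall>j\<in>V. E i j \<longrightarrow> M i j = - t))"
  obtains W where "symmetric_on V W" "psd_on V W" "\<And>i j. i \<in> V \<Longrightarrow> j \<in> V \<Longrightarrow> \<not> E i j \<Longrightarrow> i \<noteq> j \<Longrightarrow> W i j = 0"
    "(\<Sum>i\<in>V. W i i) < t * (\<Sum>i\<in>V. \<Sum>j\<in>V. if i = j then 0 else W i j)"
proof -
  define J where "J = {p \<in> V \<times> V. fst p = snd p \<or> E (fst p) (snd p)}"
  define T where "T p = (if fst p = snd p then 1 else - t)" for p :: "'a \<times> 'a"
  have "V \<noteq> {}" using infeasible by (auto simp: symmetric_on_def psd_on_def quad_form_def)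
  have J: "J \<subseteq> V \<times> V" "\<And>i. i \<in> V \<Longrightarrow> (i, i) \<in> J" "\<And>i j. (i, j) \<in> J \<Longrightarrow> (j, i) \<in> J"
    unfolding J_def using E_sym by auto
  have T: "\<And>i. T (i, i) = 1" "\<And>i j. T (i, j) = T (j, i)" by (simp_all add: T_def)
  obtain F0 W where F0: "F0 \<in> spectraplex V (card V)" and W: "symmetric_on V W" "psd_on V W"
    "\<And>i j. i \<in> V \<Longrightarrow> j \<in> V \<Longrightarrow> (i, j) \<notin> J \<Longrightarrow> W i j = 0"
    and residual: "(\<Sum>i\<in>V. \<Sum>j\<in>V. W i j * T (i, j)) = - (\<Sum>p\<in>J. (F0 p - T p)\<^sup>2)"
    using spectraplex_dual_certificate[where T = T, OF assms(1) \<open>V \<noteq> {}\<close> J T] by blast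
  have "(\<Sum>p\<in>J. (F0 p - T p)\<^sup>2) \<noteq> 0"
  proof
    assume "(\<Sum>p\<in>J. (F0 p - T p)\<^sup>2) = 0"
    moreover have "finite J" using assms(1) unfolding J_def by simp
    ultimately have fit: "\<forall>p\<in>J. F0 p = T p" by (simp add: sum_nonneg_eq_0_iff)
    have "\<forall>i\<in>V. F0 (i, i) = 1" "\<forall>i\<in>V. \<forall>j\<in>V. E i j \<longrightarrow> F0 (i, j) = - t"
      using fit E_irrefl by (auto simp: J_def T_def)
    moreover have "symmetric_on V (\<lambda>i j. F0 (i, j))" "psd_on V (\<lambda>i j. F0 (i, j))"
      using F0 unfolding spectraplex_def by auto
    ultimately show False using infeasible by blast
  qed
  then have "(\<Sum>i\<in>V. \<Sum>j\<in>V. W i j * T (i, j)) < 0"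
    unfolding residual by (simp add: sum_nonneg order_less_le)
  moreover have "W i j * T (i, j) = (if i = j then W i j else 0) - t * (if i = j then 0 else W i j)" for i j
    by (simp add: T_def)
  ultimately have "(\<Sum>i\<in>V. W i i) - t * (\<Sum>i\<in>V. \<Sum>j\<in>V. if i = j then 0 else W i j) < 0"
    using assms(1) by (simp add: sum_subtractf sum_distrib_left)
  then show ?thesis using that W unfolding J_def by auto
qed

section \<open>Strict vector colourings\<close>

lemma is_graph_finite: "is_graph G \<Longrightarrow> finite (verts G)"
  unfolding is_graph_def by blast

lemma is_graph_adj_verts: "is_graph G \<Longrightarrow> adj G u v \<Longrightarrow> u \<in> verts G \<and> v \<in> verts G"
  unfolding is_graph_def by blast

lemma is_graph_adj_sym: "is_graph G \<Longrightarrow> adj G u v \<Longrightarrow> adj G v u"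
  unfolding is_graph_def by blast

lemma is_graph_adj_irrefl: "is_graph G \<Longrightarrow> \<not> adj G u u"
  unfolding is_graph_def by blast

lemma verts_cat_prod [simp]: "verts (cat_prod G H) = verts G \<times> verts H"
  by (simp add: cat_prod_def verts_def)

lemma adj_cat_prod [simp]: "adj (cat_prod G H) p q \<longleftrightarrow> adj G (fst p) (fst q) \<and> adj H (snd p) (snd q)"
  by (simp add: cat_prod_def adj_def case_prod_beta)

lemma strict_vector_coloring_gram:
  assumes "strict_vector_coloring G k d \<phi>"
  shows "v \<in> verts G \<Longrightarrow> gram d \<phi> v v = 1"
    and "adj G u v \<Longrightarrow> gram d \<phi> u v = - 1 / (k - 1)"
  using assms unfolding strict_vector_coloring_def gram_def by (simp_all add: power2_eq_square)

lemma strict_vector_colorable_if_psd: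
  assumes G: "is_graph G" and "symmetric_on (verts G) M" "psd_on (verts G) M"
    and diag: "\<And>v. v \<in> verts G \<Longrightarrow> M v v = 1"
    and edge: "\<And>u v. u \<in> verts G \<Longrightarrow> v \<in> verts G \<Longrightarrow> adj G u v \<Longrightarrow> M u v = - 1 / (k - 1)"
  shows "strict_vector_colorable G k"
proof -
  obtain d \<phi> where \<phi>: "\<And>u v. u \<in> verts G \<Longrightarrow> v \<in> verts G \<Longrightarrow> M u v = gram d \<phi> u v"
    using psd_on_imp_gram[OF is_graph_finite[OF G] assms(2,3)] by blast
  define \<phi>' where "\<phi>' v c = (if c < d then \<phi> v c else 0)" for v c
  have gram': "gram d \<phi>' u v = M u v" if "u \<in> verts G" "v \<in> verts G" for u v
    unfolding \<phi>[OF that] gram_def \<phi>'_def by (intro sum.cong) auto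
  have "strict_vector_coloring G k d \<phi>'"
    unfolding strict_vector_coloring_def
  proof (intro conjI ballI allI impI)
    fix v assume "v \<in> verts G"
    then show "(\<Sum>c<d. (\<phi>' v c)\<^sup>2) = 1"
      using diag gram' unfolding gram_def by (simp add: power2_eq_square)
  next
    fix u v assume "adj G u v"
    then show "(\<Sum>c<d. \<phi>' u c * \<phi>' v c) = - 1 / (k - 1)"
      using edge gram' is_graph_adj_verts[OF G] unfolding gram_def by metis
  qed (simp add: \<phi>'_def)
  then show ?thesis unfolding strict_vector_colorable_def by blast
qed

lemma strict_vector_colorable_exists:
  assumes G: "is_graph G"
  shows "\<exists>k>1. strict_vector_colorable G k"
proof -
  define n where "n = card (verts G)"
  define t :: real where "t = 1 / (n + 1)"
  define M where "M i j = (1 + t) * of_bool (i = j) + (- t) * 1" for i j :: 'a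
  have "psd_on (verts G) M"
    unfolding psd_on_def
  proof
    fix x
    have "quad_form (verts G) M x = (1 + t) * sqnorm (verts G) x - t * (\<Sum>i\<in>verts G. x i)\<^sup>2"
      unfolding M_def quad_form_linear quad_form_rank_one[where y = "\<lambda>_. 1", simplified]
        quad_form_identity[OF is_graph_finite[OF G]] by simp
    moreover have "(\<Sum>i\<in>verts G. x i)\<^sup>2 \<le> n * sqnorm (verts G) x"
      using sum_squared_le_sum_of_squares unfolding n_def sqnorm_def by (metis mult.commute)
    moreover have "t * n \<le> 1 + t" "0 \<le> t" unfolding t_def by (simp_all add: field_simps)
    then have "t * (n * sqnorm (verts G) x) \<le> (1 + t) * sqnorm (verts G) x"
      using mult_right_mono sqnorm_nonneg by (metis mult.assoc)
    ultimately show "0 \<le> quad_form (verts G) M x"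
      using mult_left_mono[OF \<open>(\<Sum>i\<in>verts G. x i)\<^sup>2 \<le> _\<close> \<open>0 \<le> t\<close>] by linarith
  qed
  moreover have "symmetric_on (verts G) M" unfolding symmetric_on_def M_def by auto
  ultimately have "strict_vector_colorable G (n + 2)"
    using is_graph_adj_irrefl[OF G]
    by (intro strict_vector_colorable_if_psd[OF G, where M = M]) (auto simp: M_def t_def)
  then show ?thesis by (intro exI[of _ "real (n + 2)"]) simp
qed

lemma strict_vector_colorable_cat_prod_fst:
  assumes "strict_vector_colorable G k"
  shows "strict_vector_colorable (cat_prod G H) k"
proof -
  obtain d \<phi> where "strict_vector_coloring G k d \<phi>"
    using assms unfolding strict_vector_colorable_def by blast
  then have "strict_vector_coloring (cat_prod G H) k d (\<phi> \<circ> fst)"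
    unfolding strict_vector_coloring_def by auto
  then show ?thesis unfolding strict_vector_colorable_def by blast
qed

lemma strict_vector_colorable_cat_prod_snd:
  assumes "strict_vector_colorable H k"
  shows "strict_vector_colorable (cat_prod G H) k"
proof -
  obtain d \<phi> where "strict_vector_coloring H k d \<phi>"
    using assms unfolding strict_vector_colorable_def by blast
  then have "strict_vector_coloring (cat_prod G H) k d (\<phi> \<circ> snd)"
    unfolding strict_vector_coloring_def by auto
  then show ?thesis unfolding strict_vector_colorable_def by blast
qed

lemma not_strict_vector_colorable_certificate:
  assumes G: "is_graph G" and "1 < k" and not_colorable: "\<not> strict_vector_colorable G k"
  obtains A v where "symmetric_on (verts G) A"
    and "\<And>i j. i \<in> verts G \<Longrightarrow> j \<in> verts G \<Longrightarrow> \<not> adj G i j \<Longrightarrow> A i j = 0"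
    and "\<And>x. - sqnorm (verts G) x \<le> quad_form (verts G) A x"
    and "(k - 1) * sqnorm (verts G) v < quad_form (verts G) A v"
proof -
  let ?V = "verts G"
  define t where "t = 1 / (k - 1)"
  have fin: "finite ?V" using is_graph_finite[OF G] .
  have "\<not> (\<exists>M. symmetric_on ?V M \<and> psd_on ?V M \<and> (\<forall>i\<in>?V. M i i = 1)
      \<and> (\<forall>i\<in>?V. \<forall>j\<in>?V. adj G i j \<longrightarrow> M i j = - t))"
    using not_colorable strict_vector_colorable_if_psd[OF G] unfolding t_def minus_divide_left by blast
  then obtain W where W: "symmetric_on ?V W" "psd_on ?V W"
    and support: "\<And>i j. i \<in> ?V \<Longrightarrow> j \<in> ?V \<Longrightarrow> \<not> adj G i j \<Longrightarrow> i \<noteq> j \<Longrightarrow> W i j = 0"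
    and gap: "(\<Sum>i\<in>?V. W i i) < t * (\<Sum>i\<in>?V. \<Sum>j\<in>?V. if i = j then 0 else W i j)"
    using psd_unit_diagonal_infeasible_certificate[where E = "adj G" and t = t,
        OF fin is_graph_adj_sym[OF G] is_graph_adj_irrefl[OF G]]
    by blast
  define A where "A i j = (if i = j then 0 else W i j / (sqrt (W i i) * sqrt (W j j)))" for i j
  define v where "v i = sqrt (W i i)" for i
  have "sqnorm ?V v = (\<Sum>i\<in>?V. W i i)"
    unfolding sqnorm_def v_def using psd_on_diag_nonneg[OF fin W(2)] by simp
  moreover have "quad_form ?V A v = (\<Sum>i\<in>?V. \<Sum>j\<in>?V. if i = j then 0 else W i j)"
    unfolding A_def v_def by (rule psd_on_normalized_offdiag(2)[OF fin W])
  ultimately have "(k - 1) * sqnorm ?V v < quad_form ?V A v"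
    using mult_strict_left_mono[OF gap, of "k - 1"] \<open>1 < k\<close> unfolding t_def by simp
  moreover have "- sqnorm ?V x \<le> quad_form ?V A x" for x
    unfolding A_def by (rule psd_on_normalized_offdiag(1)[OF fin W])
  moreover have "symmetric_on ?V A"
    using W(1) unfolding symmetric_on_def A_def by (auto simp: mult.commute)
  moreover have "A i j = 0" if "i \<in> ?V" "j \<in> ?V" "\<not> adj G i j" for i j
    using support that unfolding A_def by auto
  ultimately show ?thesis using that[of A v] by simp
qed

lemma strict_vector_coloring_cat_prod_gram_entry:
  fixes G :: "'a graph" and H :: "'b graph"
  assumes G: "is_graph G" and coloring: "strict_vector_coloring (cat_prod G H) k d \<psi>"
    and A: "\<And>i j. i \<in> verts G \<Longrightarrow> j \<in> verts G \<Longrightarrow> \<not> adj G i j \<Longrightarrow> A i j = 0"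
    and B: "\<And>i j. i \<in> verts H \<Longrightarrow> j \<in> verts H \<Longrightarrow> \<not> adj H i j \<Longrightarrow> B i j = 0"
    and "p \<in> verts G \<times> verts H" "q \<in> verts G \<times> verts H"
  shows "gram d \<psi> p q * (A (fst p) (fst q) * B (snd p) (snd q)
      + m * (of_bool (fst p = fst q) * of_bool (snd p = snd q)))
    = - (1 / (k - 1)) * (A (fst p) (fst q) * B (snd p) (snd q))
      + m * (of_bool (fst p = fst q) * of_bool (snd p = snd q))"
proof (cases "p = q")
  case True
  then show ?thesis
    using assms(5) A strict_vector_coloring_gram(1)[OF coloring, of p] is_graph_adj_irrefl[OF G] by auto
next
  case False
  then have "of_bool (fst p = fst q) * of_bool (snd p = snd q) = (0 :: real)" by (auto simp: prod_eq_iff)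
  then show ?thesis
    using assms(5,6) A B strict_vector_coloring_gram(2)[OF coloring, of p q]
    by (cases "adj G (fst p) (fst q) \<and> adj H (snd p) (snd q)") auto
qed

lemma cat_prod_coloring_quad_form_bound:
  fixes G :: "'a graph" and H :: "'b graph"
  assumes G: "is_graph G" and H: "is_graph H" and "1 < k"
    and coloring: "strict_vector_coloring (cat_prod G H) k d \<psi>"
    and A: "symmetric_on (verts G) A"
      "\<And>i j. i \<in> verts G \<Longrightarrow> j \<in> verts G \<Longrightarrow> \<not> adj G i j \<Longrightarrow> A i j = 0"
      "\<And>x. - sqnorm (verts G) x \<le> quad_form (verts G) A x"
      "\<And>x. quad_form (verts G) A x \<le> a * sqnorm (verts G) x"
    and B: "\<And>i j. i \<in> verts H \<Longrightarrow> j \<in> verts H \<Longrightarrow> \<not> adj H i j \<Longrightarrow> B i j = 0"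
      "\<And>x. - sqnorm (verts H) x \<le> quad_form (verts H) B x"
      "\<And>x. quad_form (verts H) B x \<le> b * sqnorm (verts H) x"
    and "0 \<le> a" "0 \<le> b"
  shows "quad_form (verts G) A u * quad_form (verts H) B z
    \<le> (k - 1) * max a b * (sqnorm (verts G) u * sqnorm (verts H) z)"
proof -
  let ?V = "verts G \<times> verts H" and ?\<delta> = "\<lambda>i j. of_bool (i = j) :: real"
  let ?w = "\<lambda>p. u (fst p) * z (snd p)"
    and ?AB = "\<lambda>p q. A (fst p) (fst q) * B (snd p) (snd q)"
    and ?I = "\<lambda>p q. ?\<delta> (fst p) (fst q) * ?\<delta> (snd p) (snd q)"
  have fin: "finite (verts G)" "finite (verts H)" using G H by (simp_all add: is_graph_finite)
  have "0 \<le> quad_form ?V (\<lambda>p q. gram d \<psi> p q * (?AB p q + max a b * ?I p q)) ?w"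
    using psd_on_gram_schur_tensor_shifted[OF fin A(1,3,4) B(2,3) \<open>0 \<le> a\<close> \<open>0 \<le> b\<close>]
    unfolding psd_on_def by blast
  also have "quad_form ?V (\<lambda>p q. gram d \<psi> p q * (?AB p q + max a b * ?I p q)) ?w
      = quad_form ?V (\<lambda>p q. - (1 / (k - 1)) * ?AB p q + max a b * ?I p q) ?w"
    using strict_vector_coloring_cat_prod_gram_entry[where A = A and B = B, OF G coloring A(2) B(1)]
    by (intro quad_form_cong) auto
  also have "\<dots> = - (1 / (k - 1)) * (quad_form (verts G) A u * quad_form (verts H) B z)
      + max a b * (sqnorm (verts G) u * sqnorm (verts H) z)"
    unfolding quad_form_linear quad_form_tensor quad_form_tensor[of "verts G" "verts H" ?\<delta> ?\<delta> u z]
      quad_form_identity[OF fin(1)] quad_form_identity[OF fin(2)] ..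
  finally have "0 \<le> (k - 1) * (- (1 / (k - 1)) * (quad_form (verts G) A u * quad_form (verts H) B z)
      + max a b * (sqnorm (verts G) u * sqnorm (verts H) z))"
    using \<open>1 < k\<close> by simp
  moreover have "(k - 1) * (- (1 / (k - 1)) * (quad_form (verts G) A u * quad_form (verts H) B z)
      + max a b * (sqnorm (verts G) u * sqnorm (verts H) z))
      = (k - 1) * max a b * (sqnorm (verts G) u * sqnorm (verts H) z)
        - quad_form (verts G) A u * quad_form (verts H) B z"
    using \<open>1 < k\<close> by (simp add: field_simps)
  ultimately show ?thesis by linarith
qed

lemma strict_vector_colorable_cat_prodD:
  fixes G :: "'a graph" and H :: "'b graph"
  assumes G: "is_graph G" and H: "is_graph H" and "1 < k"
    and "strict_vector_colorable (cat_prod G H) k"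
  shows "strict_vector_colorable G k \<or> strict_vector_colorable H k"
proof (rule ccontr)
  assume "\<not> ?thesis"
  then obtain A v B w where
    A: "symmetric_on (verts G) A" "\<And>i j. i \<in> verts G \<Longrightarrow> j \<in> verts G \<Longrightarrow> \<not> adj G i j \<Longrightarrow> A i j = 0"
      "\<And>x. - sqnorm (verts G) x \<le> quad_form (verts G) A x" "(k - 1) * sqnorm (verts G) v < quad_form (verts G) A v"
    and B: "\<And>i j. i \<in> verts H \<Longrightarrow> j \<in> verts H \<Longrightarrow> \<not> adj H i j \<Longrightarrow> B i j = 0"
      "\<And>x. - sqnorm (verts H) x \<le> quad_form (verts H) B x"
      "(k - 1) * sqnorm (verts H) w < quad_form (verts H) B w"
    using not_strict_vector_colorable_certificate[OF G \<open>1 < k\<close>]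
      not_strict_vector_colorable_certificate[OF H \<open>1 < k\<close>] by metis
  obtain d \<psi> where coloring: "strict_vector_coloring (cat_prod G H) k d \<psi>"
    using assms(4) unfolding strict_vector_colorable_def by blast
  have fin: "finite (verts G)" "finite (verts H)" using G H by (simp_all add: is_graph_finite)
  define a where "a = rayleigh_max (verts G) A"
  define b where "b = rayleigh_max (verts H) B"
  have "k - 1 < a" "k - 1 < b"
    unfolding a_def b_def using rayleigh_max_greater fin A(4) B(3) by blast+
  have nonempty: "verts G \<noteq> {}" "verts H \<noteq> {}"
    using A(4) B(3) by (auto simp: sqnorm_def quad_form_def)
  have "quad_form (verts G) A u * quad_form (verts H) B z
      \<le> (k - 1) * max a b * (sqnorm (verts G) u * sqnorm (verts H) z)" for u z
    using \<open>1 < k\<close> \<open>k - 1 < a\<close> \<open>k - 1 < b\<close> unfolding a_def b_def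
    by (intro cat_prod_coloring_quad_form_bound[OF G H \<open>1 < k\<close> coloring A(1-3) _ B(1,2)]
        quad_form_le_rayleigh_max fin) auto
  then have "a * b \<le> (k - 1) * max a b"
    unfolding a_def b_def using \<open>1 < k\<close> \<open>k - 1 < a\<close>
    by (intro rayleigh_max_mult_le fin nonempty) (auto simp: a_def)
  moreover have "min a b * max a b = a * b" by (simp add: min_def max_def)
  moreover have "0 < max a b" using \<open>k - 1 < a\<close> \<open>1 < k\<close> by (simp add: less_max_iff_disj)
  ultimately have "min a b * max a b \<le> (k - 1) * max a b" by linarith
  then have "min a b \<le> k - 1" using mult_le_cancel_right_pos[OF \<open>0 < max a b\<close>] by blast
  then show False using \<open>k - 1 < a\<close> \<open>k - 1 < b\<close> by simp
qed

theorem theorem4p6: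
  fixes G :: "'a graph" and H :: "'b graph"
  assumes "is_graph G" and "is_graph H"
  shows "strict_vector_chromatic_number (cat_prod G H)
           = min (strict_vector_chromatic_number G) (strict_vector_chromatic_number H)"
proof -
  let ?K = "\<lambda>X :: _ graph. {k. k > 1 \<and> strict_vector_colorable X k}"
  have "?K (cat_prod G H) = ?K G \<union> ?K H"
    using strict_vector_colorable_cat_prodD[OF assms] strict_vector_colorable_cat_prod_fst
      strict_vector_colorable_cat_prod_snd by blast
  moreover have "?K G \<noteq> {}" "?K H \<noteq> {}"
    using strict_vector_colorable_exists assms by blast+
  moreover have "bdd_below (?K G)" "bdd_below (?K H)"
    by (auto intro: bdd_belowI[of _ 1])
  ultimately show ?thesis
    unfolding strict_vector_chromatic_number_def by (simp add: cInf_union_distrib inf_min)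
qed

end
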